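(* Let $1\le m\le n$, $x=(x_1,\dots,x_m)$, $y=(y_1,\dots,y_n)$, and let $k$ be an integer with $1\le k\le m$. Then \[\omega(x,y;t)=t^{m-n}(1-t)\sum_{l=1}^n\omega(x^{(k)},y^{(l)};t)\,\frac{y_l}{x_k-ty_l}\prod_{\substack{i=1\\ i\ne k}}^m\frac{x_i-y_l}{x_i-ty_l}\prod_{\substack{i=1\\ i\ne l}}^n\frac{y_i-ty_l}{y_i-y_l}.\]
   Context: For $x=(x_1,\dots,x_m)$ and $y=(y_1,\dots,y_n)$ (any $m\ge0$, with $\omega=1$ when $m=0$), \[\omega(x,y;t)=\sum_{I\subseteq\{1,\dots,m\}}(-1)^{|I|}t^{\binom{|I|}{2}}\prod_{i\in I,\ j\in\{1,\dots,m\}\setminus I}\frac{x_i-tx_j}{x_i-x_j}\prod_{i\in I}\prod_{j=1}^n\frac{x_i-y_j}{x_i-ty_j}.\] $x^{(k)}$ denotes $x$ with $x_k$ removed, and $y^{(l)}$ denotes $y$ with $y_l$ removed. *)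

theory Defs
  imports Main
begin

text \<open>Lists are 0-indexed: entry i of the list corresponds to x_(i+1) of the paper.\<close>

definition del_nth :: "nat \<Rightarrow> 'a list \<Rightarrow> 'a list" where
  "del_nth k xs = take k xs @ drop (Suc k) xs"

definition omega :: "'a::field list \<Rightarrow> 'a list \<Rightarrow> 'a \<Rightarrow> 'a" where
  "omega xs ys t =
     (\<Sum>I\<in>Pow {0..<length xs}.
        (-1) ^ card I * t ^ (card I choose 2)
        * (\<Prod>i\<in>I. \<Prod>j\<in>{0..<length xs} - I. (xs!i - t * xs!j) / (xs!i - xs!j))
        * (\<Prod>i\<in>I. \<Prod>j\<in>{0..<length ys}. (xs!i - ys!j) / (xs!i - t * ys!j)))"

end

theory Submission
  imports Defs "HOL-Computational_Algebra.Polynomial"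
begin

text \<open>Regard \<open>omega\<close> as a function of the single variable \<open>z = x\<^sub>k\<close>. Over the common
  denominator \<open>\<Prod>\<^sub>i\<^sub>\<noteq>\<^sub>k (z - x\<^sub>i) \<Prod>\<^sub>l (z - t y\<^sub>l)\<close> its numerator is a polynomial of degree
  less than \<open>m - 1 + n\<close>, since for every \<open>J\<close> the terms \<open>I = J\<close> and \<open>I = J \<union> {k}\<close> have the same
  leading coefficient. The numerator vanishes at \<open>z = x\<^sub>i\<close>, where the contributions of \<open>K\<close>
  and \<open>K \<union> {i}\<close> cancel, and at \<open>z = t y\<^sub>l\<close> only the subsets containing \<open>k\<close> survive; they
  add up to \<open>omega\<close> of \<open>x\<close> without \<open>x\<^sub>k\<close> and \<open>y\<close> without \<open>y\<^sub>l\<close>, times a product independent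
  of the subset. The partial fraction polynomial built from the right-hand side takes the same
  values at these \<open>m - 1 + n\<close> points, so the two polynomials coincide; evaluating at \<open>z = x\<^sub>k\<close>
  gives the formula.\<close>

lemma degree_prod_linear:
  fixes a b :: "'b \<Rightarrow> 'a::field"
  assumes "finite A" "\<forall>i\<in>A. b i \<noteq> 0"
  shows "degree (\<Prod>i\<in>A. [:a i, b i:]) = card A"
proof -
  have "degree (\<Prod>i\<in>A. [:a i, b i:]) = (\<Sum>i\<in>A. degree [:a i, b i:])"
    by (rule degree_prod_eq_sum_degree) (use assms in auto)
  also have "\<dots> = card A" using assms by simp
  finally show ?thesis .
qed

lemma lead_coeff_prod_linear:
  fixes a b :: "'b \<Rightarrow> 'a::field"
  assumes "\<forall>i\<in>A. b i \<noteq> 0"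
  shows "lead_coeff (\<Prod>i\<in>A. [:a i, b i:]) = (\<Prod>i\<in>A. b i)"
  unfolding lead_coeff_prod using assms by (intro prod.cong) auto

lemma prod_linear_nonzero:
  fixes a b :: "'b \<Rightarrow> 'a::field"
  assumes "\<forall>i\<in>A. b i \<noteq> 0"
  shows "(\<Prod>i\<in>A. [:a i, b i:]) \<noteq> 0"
  using assms by (cases "finite A") (auto simp: prod_zero_iff)

lemma degree_diff_less_if_lead_coeff_eq:
  fixes p q :: "'a::ab_group_add poly"
  assumes "degree p = n" "degree q = n" "lead_coeff p = lead_coeff q" "n > 0"
  shows "degree (p - q) < n"
proof (rule degree_lessI)
  show "\<forall>j\<ge>n. coeff (p - q) j = 0"
    using assms by (auto simp: coeff_eq_0 le_less)
qed (use assms in auto)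

lemma sum_Pow_insert:
  assumes "finite S" "k \<notin> S"
  shows "(\<Sum>I\<in>Pow (insert k S). g I) = (\<Sum>J\<in>Pow S. g J + g (insert k J))"
proof -
  have "inj_on (insert k) (Pow S)"
    using assms(2) by (intro inj_onI) (metis PowD insert_ident subsetD)
  moreover have "Pow S \<inter> insert k ` Pow S = {}" using assms(2) by auto
  ultimately show ?thesis
    unfolding Pow_insert sum.distrib using assms(1)
    by (simp add: sum.union_disjoint sum.reindex)
qed

lemma prod_mult_prod_divide:
  fixes g h :: "'b \<Rightarrow> 'a::field"
  assumes "\<forall>i\<in>A. g i \<noteq> 0"
  shows "prod g A * (\<Prod>i\<in>A. h i / g i) = prod h A"
  unfolding prod.distrib[symmetric] using assms by (intro prod.cong) auto

text \<open>The function \<open>omega\<close> with the variables indexed by arbitrary finite sets rather than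
  by list positions, so that deleting \<open>x\<^sub>k\<close> or \<open>y\<^sub>l\<close> just removes an index.\<close>

definition omega_pair :: "('b \<Rightarrow> 'a::field) \<Rightarrow> 'a \<Rightarrow> 'b \<Rightarrow> 'b \<Rightarrow> 'a" where
  "omega_pair X t i j = (X i - t * X j) / (X i - X j)"

definition omega_weight :: "'c set \<Rightarrow> ('c \<Rightarrow> 'a::field) \<Rightarrow> 'a \<Rightarrow> 'a \<Rightarrow> 'a" where
  "omega_weight T Y t w = (\<Prod>j\<in>T. (w - Y j) / (w - t * Y j))"

definition omega_term ::
    "'b set \<Rightarrow> ('b \<Rightarrow> 'a::field) \<Rightarrow> 'c set \<Rightarrow> ('c \<Rightarrow> 'a) \<Rightarrow> 'a \<Rightarrow> 'b set \<Rightarrow> 'a" where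
  "omega_term S X T Y t I = (-1) ^ card I * t ^ (card I choose 2)
     * (\<Prod>i\<in>I. \<Prod>j\<in>S - I. omega_pair X t i j) * (\<Prod>i\<in>I. omega_weight T Y t (X i))"

definition omega_on :: "'b set \<Rightarrow> ('b \<Rightarrow> 'a::field) \<Rightarrow> 'c set \<Rightarrow> ('c \<Rightarrow> 'a) \<Rightarrow> 'a \<Rightarrow> 'a" where
  "omega_on S X T Y t = (\<Sum>I\<in>Pow S. omega_term S X T Y t I)"

lemma omega_eq_omega_on:
  "omega xs ys t = omega_on {0..<length xs} (nth xs) {0..<length ys} (nth ys) t"
  unfolding omega_def omega_on_def omega_term_def omega_pair_def omega_weight_def by simp

lemma omega_on_cong:
  assumes "\<forall>i\<in>S. X i = X' i" "\<forall>j\<in>T. Y j = Y' j"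
  shows "omega_on S X T Y t = omega_on S X' T Y' t"
  unfolding omega_on_def omega_term_def omega_pair_def omega_weight_def
  by (intro sum.cong refl arg_cong2[where f="(*)"] prod.cong) (use assms in auto)

lemma omega_on_reindex:
  assumes "inj_on h S" "inj_on g T"
  shows "omega_on (h ` S) X (g ` T) Y t = omega_on S (X \<circ> h) T (Y \<circ> g) t"
proof -
  have "Pow (h ` S) = (`) h ` Pow S" by (auto simp: subset_image_iff)
  moreover have "inj_on ((`) h) (Pow S)" using assms(1) by (rule inj_on_image_Pow)
  moreover have "omega_term (h ` S) X (g ` T) Y t (h ` I) = omega_term S (X \<circ> h) T (Y \<circ> g) t I"
    if "I \<subseteq> S" for I
  proof -
    have "h ` S - h ` I = h ` (S - I)" using assms(1) that by (simp add: inj_on_image_set_diff)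
    moreover have "inj_on h I" "inj_on h (S - I)" using assms(1) that inj_on_subset by blast+
    ultimately show ?thesis
      unfolding omega_term_def omega_pair_def omega_weight_def
      using assms(2) by (simp add: card_image prod.reindex)
  qed
  ultimately show ?thesis unfolding omega_on_def by (simp add: sum.reindex)
qed

lemma omega_term_insert_notin:
  assumes "finite S" "k \<notin> S" "J \<subseteq> S"
  shows "omega_term (insert k S) X T Y t J = omega_term S X T Y t J * (\<Prod>i\<in>J. omega_pair X t i k)"
proof -
  have "insert k S - J = insert k (S - J)" using assms by auto
  then have "(\<Prod>i\<in>J. \<Prod>j\<in>insert k S - J. omega_pair X t i j)
      = (\<Prod>i\<in>J. \<Prod>j\<in>S - J. omega_pair X t i j) * (\<Prod>i\<in>J. omega_pair X t i k)"
    using assms by (simp add: prod.distrib[symmetric] mult.commute)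
  then show ?thesis unfolding omega_term_def by (simp add: algebra_simps)
qed

lemma omega_term_insert_in:
  assumes "finite S" "k \<notin> S" "J \<subseteq> S"
  shows "omega_term (insert k S) X T Y t (insert k J) = - (t ^ card J * omega_term S X T Y t J
           * (\<Prod>j\<in>S - J. omega_pair X t k j) * omega_weight T Y t (X k))"
proof -
  have "finite J" "k \<notin> J" using assms finite_subset by auto
  moreover have "insert k S - insert k J = S - J" using assms by auto
  moreover have "(Suc n choose 2) = (n choose 2) + n" for n
    by (simp add: numeral_2_eq_2)
  ultimately show ?thesis unfolding omega_term_def by (simp add: power_add algebra_simps)
qed

lemma omega_on_insert:
  assumes "finite S" "k \<notin> S"
  shows "omega_on (insert k S) X T Y t = (\<Sum>J\<in>Pow S. omega_term S X T Y t J *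
    ((\<Prod>i\<in>J. omega_pair X t i k)
      - t ^ card J * (\<Prod>j\<in>S - J. omega_pair X t k j) * omega_weight T Y t (X k)))"
  unfolding omega_on_def sum_Pow_insert[OF assms]
  using assms by (intro sum.cong refl) (simp add: omega_term_insert_notin omega_term_insert_in algebra_simps)

lemma omega_term_remove_y:
  assumes "finite T" "l \<in> T"
  shows "omega_term S X T Y t J
    = omega_term S X (T - {l}) Y t J * (\<Prod>r\<in>J. (X r - Y l) / (X r - t * Y l))"
proof -
  have "omega_weight T Y t (X r) = omega_weight (T - {l}) Y t (X r) * ((X r - Y l) / (X r - t * Y l))" for r
    unfolding omega_weight_def by (simp add: prod.remove[OF assms] mult.commute)
  then show ?thesis unfolding omega_term_def by (simp only: prod.distrib mult.assoc)
qed

context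
  fixes S :: "'b set" and k :: 'b and X :: "'b \<Rightarrow> 'a::field" and T :: "'c set"
    and Y :: "'c \<Rightarrow> 'a" and t :: 'a
  assumes fin_S: "finite S" and k_notin: "k \<notin> S" and fin_T: "finite T" and T_ne: "T \<noteq> {}"
    and inj_X: "inj_on X (insert k S)" and inj_Y: "inj_on Y T" and t_ne: "t \<noteq> 0"
    and X_ne_tY: "\<forall>i\<in>insert k S. \<forall>j\<in>T. X i \<noteq> t * Y j"
begin

definition denom_poly :: "'a poly" where
  "denom_poly = (\<Prod>i\<in>S. [:- X i, 1:]) * (\<Prod>l\<in>T. [:- (t * Y l), 1:])"

text \<open>With \<open>X k\<close> replaced by \<open>z\<close>, the two products in the summand for \<open>J\<close> of
  \<open>omega_on_insert\<close> are \<open>numer_excl J\<close> and \<open>numer_incl J\<close> divided by \<open>denom_poly\<close>.\<close>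

definition numer_excl :: "'b set \<Rightarrow> 'a poly" where
  "numer_excl J = (\<Prod>i\<in>J. [:- X i, t:]) * (\<Prod>j\<in>S - J. [:- X j, 1:]) * (\<Prod>l\<in>T. [:- (t * Y l), 1:])"

definition numer_incl :: "'b set \<Rightarrow> 'a poly" where
  "numer_incl J = (\<Prod>j\<in>S - J. [:- (t * X j), 1:]) * (\<Prod>i\<in>J. [:- X i, 1:]) * (\<Prod>l\<in>T. [:- Y l, 1:])"

definition numer_poly :: "'a poly" where
  "numer_poly = (\<Sum>J\<in>Pow S. smult (omega_term S X T Y t J) (numer_excl J - smult (t ^ card J) (numer_incl J)))"

definition residue :: "'c \<Rightarrow> 'a" where
  "residue l = t powi (int (card S + 1) - int (card T)) * (1 - t) * omega_on S X (T - {l}) Y t * Y l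
     * (\<Prod>i\<in>S. (X i - Y l) / (X i - t * Y l)) * (\<Prod>i\<in>T - {l}. (Y i - t * Y l) / (Y i - Y l))"

definition partial_fraction_poly :: "'a poly" where
  "partial_fraction_poly =
     (\<Sum>l\<in>T. smult (residue l) ((\<Prod>i\<in>S. [:- X i, 1:]) * (\<Prod>j\<in>T - {l}. [:- (t * Y j), 1:])))"

lemma poly_denom_poly: "poly denom_poly z = (\<Prod>i\<in>S. z - X i) * (\<Prod>l\<in>T. z - t * Y l)"
  by (simp add: denom_poly_def poly_prod)

lemma poly_numer_excl:
  "poly (numer_excl J) z = (\<Prod>i\<in>J. z * t - X i) * (\<Prod>j\<in>S - J. z - X j) * (\<Prod>l\<in>T. z - t * Y l)"
  by (simp add: numer_excl_def poly_prod)

lemma poly_numer_incl: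
  "poly (numer_incl J) z = (\<Prod>j\<in>S - J. z - t * X j) * (\<Prod>i\<in>J. z - X i) * (\<Prod>l\<in>T. z - Y l)"
  by (simp add: numer_incl_def poly_prod)

lemma poly_numer_poly:
  "poly numer_poly z = (\<Sum>J\<in>Pow S. omega_term S X T Y t J
     * (poly (numer_excl J) z - t ^ card J * poly (numer_incl J) z))"
  by (simp add: numer_poly_def poly_sum)

lemma poly_partial_fraction_poly:
  "poly partial_fraction_poly z
     = (\<Sum>l\<in>T. residue l * ((\<Prod>i\<in>S. z - X i) * (\<Prod>j\<in>T - {l}. z - t * Y j)))"
  by (simp add: partial_fraction_poly_def poly_sum poly_prod)

lemma X_diff_ne_0: "i \<in> insert k S \<Longrightarrow> j \<in> insert k S \<Longrightarrow> i \<noteq> j \<Longrightarrow> X i - X j \<noteq> 0"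
  using inj_X by (auto simp: inj_on_def)

lemma Y_diff_ne_0: "i \<in> T \<Longrightarrow> j \<in> T \<Longrightarrow> i \<noteq> j \<Longrightarrow> Y i - Y j \<noteq> 0"
  using inj_Y by (auto simp: inj_on_def)

lemma X_diff_tY_ne_0: "i \<in> insert k S \<Longrightarrow> l \<in> T \<Longrightarrow> X i - t * Y l \<noteq> 0"
  using X_ne_tY by auto

lemma degree_numer_pair:
  assumes "J \<subseteq> S"
  shows "degree (numer_excl J - smult (t ^ card J) (numer_incl J)) < card S + card T"
proof (rule degree_diff_less_if_lead_coeff_eq)
  have "finite J" using assms fin_S by (rule finite_subset)
  then have "card J + card (S - J) = card S"
    using card_Diff_subset[OF _ assms] card_mono[OF fin_S assms] by simp
  with \<open>finite J\<close> show "degree (numer_excl J) = card S + card T"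
    and "degree (smult (t ^ card J) (numer_incl J)) = card S + card T"
    unfolding numer_excl_def numer_incl_def using fin_S fin_T t_ne
    by (simp_all add: degree_mult_eq prod_linear_nonzero degree_prod_linear)
  show "lead_coeff (numer_excl J) = lead_coeff (smult (t ^ card J) (numer_incl J))"
    unfolding numer_excl_def numer_incl_def
    by (simp only: lead_coeff_mult lead_coeff_smult) (simp add: lead_coeff_prod_linear t_ne)
  show "card S + card T > 0" using fin_T T_ne by (simp add: card_gt_0_iff)
qed

lemma degree_numer_poly: "degree numer_poly < card S + card T"
  unfolding numer_poly_def
  by (rule degree_sum_less) (use degree_numer_pair fin_T T_ne in
      \<open>auto intro: le_less_trans[OF degree_smult_le] simp: card_gt_0_iff\<close>)

lemma degree_partial_fraction_poly: "degree partial_fraction_poly < card S + card T"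
  unfolding partial_fraction_poly_def
proof (rule degree_sum_less)
  fix l assume "l \<in> T"
  then have "card (T - {l}) < card T" using fin_T by (metis card_Diff1_less)
  then show "degree (smult (residue l)
      ((\<Prod>i\<in>S. [:- X i, 1:]) * (\<Prod>j\<in>T - {l}. [:- (t * Y j), 1:]))) < card S + card T"
    using fin_S fin_T t_ne
    by (auto intro!: le_less_trans[OF degree_smult_le]
        simp: degree_mult_eq prod_linear_nonzero degree_prod_linear)
qed (use fin_T T_ne in \<open>simp add: card_gt_0_iff\<close>)

lemma poly_numer_excl_at_Xk:
  assumes "J \<subseteq> S"
  shows "poly (numer_excl J) (X k) = poly denom_poly (X k) * (\<Prod>i\<in>J. omega_pair X t i k)"
proof -
  have "(X k - X i) * omega_pair X t i k = X k * t - X i" if "i \<in> J" for i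
  proof -
    have "X i - X k \<noteq> 0" using that assms k_notin X_diff_ne_0 by blast
    then show ?thesis by (simp add: omega_pair_def field_simps)
  qed
  then have "(\<Prod>i\<in>J. X k - X i) * (\<Prod>i\<in>J. omega_pair X t i k) = (\<Prod>i\<in>J. X k * t - X i)"
    by (simp add: prod.distrib[symmetric])
  moreover have "(\<Prod>i\<in>S. X k - X i) = (\<Prod>i\<in>S - J. X k - X i) * (\<Prod>i\<in>J. X k - X i)"
    by (rule prod.subset_diff[OF assms fin_S])
  ultimately show ?thesis
    unfolding poly_denom_poly poly_numer_excl by (simp add: ac_simps)
qed

lemma poly_numer_incl_at_Xk:
  assumes "J \<subseteq> S"
  shows "poly (numer_incl J) (X k)
    = poly denom_poly (X k) * (\<Prod>j\<in>S - J. omega_pair X t k j) * omega_weight T Y t (X k)"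
proof -
  have "(\<Prod>j\<in>S - J. X k - X j) * (\<Prod>j\<in>S - J. omega_pair X t k j) = (\<Prod>j\<in>S - J. X k - t * X j)"
    unfolding omega_pair_def using k_notin X_diff_ne_0 by (intro prod_mult_prod_divide) auto
  moreover have "(\<Prod>l\<in>T. X k - t * Y l) * omega_weight T Y t (X k) = (\<Prod>l\<in>T. X k - Y l)"
    unfolding omega_weight_def using X_diff_tY_ne_0 by (intro prod_mult_prod_divide) auto
  moreover have "poly denom_poly (X k) * (\<Prod>j\<in>S - J. omega_pair X t k j) * omega_weight T Y t (X k)
    = ((\<Prod>j\<in>S - J. X k - X j) * (\<Prod>j\<in>S - J. omega_pair X t k j)) * (\<Prod>i\<in>J. X k - X i)
      * ((\<Prod>l\<in>T. X k - t * Y l) * omega_weight T Y t (X k))"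
    unfolding poly_denom_poly prod.subset_diff[OF assms fin_S] by (simp only: ac_simps)
  ultimately show ?thesis
    unfolding poly_numer_incl by simp
qed

lemma poly_numer_poly_at_Xk: "poly numer_poly (X k) = poly denom_poly (X k) * omega_on (insert k S) X T Y t"
  unfolding poly_numer_poly omega_on_insert[OF fin_S k_notin] sum_distrib_left
  by (intro sum.cong refl) (simp add: poly_numer_excl_at_Xk poly_numer_incl_at_Xk algebra_simps)

lemma poly_partial_fraction_poly_at_Xk:
  "poly partial_fraction_poly (X k) = poly denom_poly (X k) * (\<Sum>l\<in>T. residue l / (X k - t * Y l))"
  unfolding poly_partial_fraction_poly sum_distrib_left
proof (intro sum.cong refl)
  fix l assume "l \<in> T"
  then have "X k - t * Y l \<noteq> 0"
    and "poly denom_poly (X k)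
      = (\<Prod>i\<in>S. X k - X i) * ((X k - t * Y l) * (\<Prod>j\<in>T - {l}. X k - t * Y j))"
    using X_diff_tY_ne_0 fin_T by (auto simp: poly_denom_poly prod.remove)
  then show "residue l * ((\<Prod>i\<in>S. X k - X i) * (\<Prod>j\<in>T - {l}. X k - t * Y j))
      = poly denom_poly (X k) * (residue l / (X k - t * Y l))"
    by simp
qed

lemma poly_numer_excl_insert_at_X:
  assumes "i \<in> S" "K \<subseteq> S - {i}"
  shows "poly (numer_excl (insert i K)) (X i) = (\<Prod>r\<in>K. omega_pair X t r i)
    * ((X i * t - X i) * (\<Prod>r\<in>K. X i - X r) * (\<Prod>j\<in>S - {i} - K. X i - X j) * (\<Prod>l\<in>T. X i - t * Y l))"
proof -
  have "finite K" "i \<notin> K" using assms fin_S finite_subset by auto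
  have "(\<Prod>r\<in>K. X i * t - X r) = (\<Prod>r\<in>K. omega_pair X t r i) * (\<Prod>r\<in>K. X i - X r)"
    unfolding prod.distrib[symmetric]
  proof (rule prod.cong[OF refl])
    fix r assume "r \<in> K"
    then have "X r - X i \<noteq> 0" using assms X_diff_ne_0 by auto
    then show "X i * t - X r = omega_pair X t r i * (X i - X r)"
      by (simp add: omega_pair_def field_simps)
  qed
  moreover have "S - insert i K = S - {i} - K" by auto
  ultimately show ?thesis
    unfolding poly_numer_excl using \<open>finite K\<close> \<open>i \<notin> K\<close> by (simp add: ac_simps)
qed

lemma poly_numer_incl_at_X:
  assumes "i \<in> S" "K \<subseteq> S - {i}"
  shows "poly (numer_incl K) (X i) = - ((\<Prod>j\<in>S - {i} - K. omega_pair X t i j) * omega_weight T Y t (X i)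
    * ((X i * t - X i) * (\<Prod>r\<in>K. X i - X r) * (\<Prod>j\<in>S - {i} - K. X i - X j) * (\<Prod>l\<in>T. X i - t * Y l)))"
proof -
  have "(\<Prod>j\<in>S - {i} - K. X i - t * X j)
      = (\<Prod>j\<in>S - {i} - K. X i - X j) * (\<Prod>j\<in>S - {i} - K. omega_pair X t i j)"
    unfolding omega_pair_def using assms X_diff_ne_0 by (intro prod_mult_prod_divide[symmetric]) auto
  moreover have "(\<Prod>l\<in>T. X i - Y l) = (\<Prod>l\<in>T. X i - t * Y l) * omega_weight T Y t (X i)"
    unfolding omega_weight_def using assms X_diff_tY_ne_0 by (intro prod_mult_prod_divide[symmetric]) auto
  moreover have "S - K = insert i (S - {i} - K)" using assms by auto
  ultimately show ?thesis
    unfolding poly_numer_incl using fin_S by (simp add: ac_simps) (simp add: algebra_simps)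
qed

lemma poly_numer_poly_at_X:
  assumes "i \<in> S"
  shows "poly numer_poly (X i) = 0"
proof -
  let ?S0 = "S - {i}"
  have ins: "insert i ?S0 = S" using assms by auto
  define g where "g J = omega_term S X T Y t J
    * (poly (numer_excl J) (X i) - t ^ card J * poly (numer_incl J) (X i))" for J
  have "g K + g (insert i K) = 0" if K: "K \<subseteq> ?S0" for K
  proof -
    have "finite K" using K fin_S finite_subset by auto
    then have "poly (numer_excl K) (X i) = 0" "poly (numer_incl (insert i K)) (X i) = 0"
      using assms K fin_S by (auto simp: poly_numer_excl poly_numer_incl prod.remove)
    moreover have "omega_term S X T Y t K = omega_term ?S0 X T Y t K * (\<Prod>r\<in>K. omega_pair X t r i)"
      and "omega_term S X T Y t (insert i K) = - (t ^ card K * omega_term ?S0 X T Y t K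
        * (\<Prod>j\<in>?S0 - K. omega_pair X t i j) * omega_weight T Y t (X i))"
      using omega_term_insert_notin[of ?S0 i K, unfolded ins] omega_term_insert_in[of ?S0 i K, unfolded ins]
        K fin_S by simp_all
    ultimately show ?thesis
      unfolding g_def using assms K
      by (simp add: poly_numer_excl_insert_at_X poly_numer_incl_at_X algebra_simps)
  qed
  moreover have "poly numer_poly (X i) = (\<Sum>K\<in>Pow ?S0. g K + g (insert i K))"
    unfolding poly_numer_poly g_def[symmetric] using sum_Pow_insert[of ?S0 i g] fin_S ins by simp
  ultimately show ?thesis by simp
qed

lemma poly_partial_fraction_poly_at_X:
  assumes "i \<in> S"
  shows "poly partial_fraction_poly (X i) = 0"
  unfolding poly_partial_fraction_poly by (simp add: prod.remove[OF fin_S assms])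

lemma poly_numer_incl_at_tY:
  assumes "l \<in> T" "J \<subseteq> S"
  shows "(\<Prod>r\<in>J. (X r - Y l) / (X r - t * Y l)) * (t ^ card J * poly (numer_incl J) (t * Y l))
    = t ^ card S * (t - 1) * Y l * (\<Prod>i\<in>S. Y l - X i) * (\<Prod>j\<in>T - {l}. t * Y l - Y j)"
proof -
  have "finite J" using assms(2) fin_S by (rule finite_subset)
  have "(\<Prod>r\<in>J. (X r - Y l) / (X r - t * Y l)) * (\<Prod>r\<in>J. t * Y l - X r) = (\<Prod>r\<in>J. Y l - X r)"
    unfolding prod.distrib[symmetric]
  proof (rule prod.cong[OF refl])
    fix r assume "r \<in> J"
    then have "X r - t * Y l \<noteq> 0" using assms X_diff_tY_ne_0 by auto
    then show "(X r - Y l) / (X r - t * Y l) * (t * Y l - X r) = Y l - X r"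
      by (simp add: field_simps)
  qed
  moreover have "t ^ card J * (\<Prod>j\<in>S - J. t * Y l - t * X j) = t ^ card S * (\<Prod>j\<in>S - J. Y l - X j)"
  proof -
    have "card J + card (S - J) = card S"
      using card_Diff_subset[OF \<open>finite J\<close> assms(2)] card_mono[OF fin_S assms(2)] by simp
    then show ?thesis by (simp add: right_diff_distrib[symmetric] prod.distrib power_add[symmetric])
  qed
  moreover have "(\<Prod>j\<in>T. t * Y l - Y j) = (t - 1) * Y l * (\<Prod>j\<in>T - {l}. t * Y l - Y j)"
    by (simp add: prod.remove[OF fin_T assms(1)] algebra_simps)
  moreover have "(\<Prod>i\<in>S. Y l - X i) = (\<Prod>j\<in>S - J. Y l - X j) * (\<Prod>r\<in>J. Y l - X r)"
    by (rule prod.subset_diff[OF assms(2) fin_S])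
  moreover have "(\<Prod>r\<in>J. (X r - Y l) / (X r - t * Y l)) * (t ^ card J * poly (numer_incl J) (t * Y l))
    = ((\<Prod>r\<in>J. (X r - Y l) / (X r - t * Y l)) * (\<Prod>r\<in>J. t * Y l - X r))
      * (t ^ card J * (\<Prod>j\<in>S - J. t * Y l - t * X j)) * (\<Prod>j\<in>T. t * Y l - Y j)"
    unfolding poly_numer_incl by (simp only: ac_simps)
  ultimately show ?thesis by (simp only: ac_simps)
qed

lemma poly_numer_poly_at_tY:
  assumes "l \<in> T"
  shows "poly numer_poly (t * Y l) = omega_on S X (T - {l}) Y t
    * (t ^ card S * (1 - t) * Y l * (\<Prod>i\<in>S. Y l - X i) * (\<Prod>j\<in>T - {l}. t * Y l - Y j))"
proof -
  have "poly (numer_excl J) (t * Y l) = 0" for J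
    unfolding poly_numer_excl by (simp add: prod.remove[OF fin_T assms])
  then have "poly numer_poly (t * Y l) = (\<Sum>J\<in>Pow S. omega_term S X (T - {l}) Y t J
      * - ((\<Prod>r\<in>J. (X r - Y l) / (X r - t * Y l)) * (t ^ card J * poly (numer_incl J) (t * Y l))))"
    unfolding poly_numer_poly omega_term_remove_y[OF fin_T assms] by (simp add: ac_simps)
  also have "\<dots> = (\<Sum>J\<in>Pow S. omega_term S X (T - {l}) Y t J
      * (t ^ card S * (1 - t) * Y l * (\<Prod>i\<in>S. Y l - X i) * (\<Prod>j\<in>T - {l}. t * Y l - Y j)))"
  proof (intro sum.cong refl)
    fix J assume "J \<in> Pow S"
    then have "J \<subseteq> S" by simp
    show "omega_term S X (T - {l}) Y t J
        * - ((\<Prod>r\<in>J. (X r - Y l) / (X r - t * Y l)) * (t ^ card J * poly (numer_incl J) (t * Y l)))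
      = omega_term S X (T - {l}) Y t J
        * (t ^ card S * (1 - t) * Y l * (\<Prod>i\<in>S. Y l - X i) * (\<Prod>j\<in>T - {l}. t * Y l - Y j))"
      unfolding poly_numer_incl_at_tY[OF assms \<open>J \<subseteq> S\<close>] by (simp add: algebra_simps)
  qed
  finally show ?thesis unfolding omega_on_def sum_distrib_right .
qed

lemma residue_y_factor_at_tY:
  assumes "l \<in> T"
  shows "t powi (int (card S + 1) - int (card T))
      * ((\<Prod>i\<in>T - {l}. (Y i - t * Y l) / (Y i - Y l)) * (\<Prod>j\<in>T - {l}. t * Y l - t * Y j))
    = t ^ card S * (\<Prod>j\<in>T - {l}. t * Y l - Y j)"
proof -
  have "(Y j - t * Y l) / (Y j - Y l) * (t * Y l - t * Y j) = t * (t * Y l - Y j)" if "j \<in> T - {l}" for j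
  proof -
    have "Y j - Y l \<noteq> 0" using that assms Y_diff_ne_0 by auto
    then show ?thesis by (simp add: field_simps)
  qed
  then have "(\<Prod>i\<in>T - {l}. (Y i - t * Y l) / (Y i - Y l)) * (\<Prod>j\<in>T - {l}. t * Y l - t * Y j)
      = t ^ (card T - 1) * (\<Prod>j\<in>T - {l}. t * Y l - Y j)"
    using fin_T assms by (simp add: prod.distrib[symmetric] prod.distrib)
  moreover have "t powi (int (card S + 1) - int (card T)) * t ^ (card T - 1) = t ^ card S"
  proof -
    have "card T \<ge> 1" using assms fin_T by (auto simp: Suc_le_eq card_gt_0_iff)
    then have "int (card S + 1) - int (card T) + int (card T - 1) = int (card S)" by simp
    then show ?thesis using t_ne by (simp flip: power_int_add power_int_of_nat)
  qed
  ultimately show ?thesis by (simp only: mult.assoc[symmetric])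
qed

lemma poly_partial_fraction_poly_at_tY:
  assumes "l \<in> T"
  shows "poly partial_fraction_poly (t * Y l) = omega_on S X (T - {l}) Y t
    * (t ^ card S * (1 - t) * Y l * (\<Prod>i\<in>S. Y l - X i) * (\<Prod>j\<in>T - {l}. t * Y l - Y j))"
proof -
  have "(\<Prod>j\<in>T - {l'}. t * Y l - t * Y j) = 0" if "l' \<in> T - {l}" for l'
    using that assms fin_T by (subst prod.remove[of "T - {l'}" l]) auto
  then have "poly partial_fraction_poly (t * Y l)
      = residue l * ((\<Prod>i\<in>S. t * Y l - X i) * (\<Prod>j\<in>T - {l}. t * Y l - t * Y j))"
    unfolding poly_partial_fraction_poly by (simp add: sum.remove[OF fin_T assms])
  also have "\<dots> = (1 - t) * omega_on S X (T - {l}) Y t * Y l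
      * ((\<Prod>i\<in>S. (X i - Y l) / (X i - t * Y l)) * (\<Prod>i\<in>S. t * Y l - X i))
      * (t powi (int (card S + 1) - int (card T))
         * ((\<Prod>i\<in>T - {l}. (Y i - t * Y l) / (Y i - Y l)) * (\<Prod>j\<in>T - {l}. t * Y l - t * Y j)))"
    unfolding residue_def by (simp only: ac_simps)
  also have "(\<Prod>i\<in>S. (X i - Y l) / (X i - t * Y l)) * (\<Prod>i\<in>S. t * Y l - X i) = (\<Prod>i\<in>S. Y l - X i)"
    unfolding prod.distrib[symmetric]
  proof (rule prod.cong[OF refl])
    fix i assume "i \<in> S"
    then have "X i - t * Y l \<noteq> 0" using assms X_diff_tY_ne_0 by auto
    then show "(X i - Y l) / (X i - t * Y l) * (t * Y l - X i) = Y l - X i"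
      by (simp add: field_simps)
  qed
  also have "t powi (int (card S + 1) - int (card T))
      * ((\<Prod>i\<in>T - {l}. (Y i - t * Y l) / (Y i - Y l)) * (\<Prod>j\<in>T - {l}. t * Y l - t * Y j))
    = t ^ card S * (\<Prod>j\<in>T - {l}. t * Y l - Y j)"
    by (rule residue_y_factor_at_tY[OF assms])
  finally show ?thesis by (simp only: ac_simps)
qed

lemma numer_poly_eq_partial_fraction_poly: "numer_poly = partial_fraction_poly"
proof (rule poly_eqI_degree)
  let ?R = "X ` S \<union> (\<lambda>l. t * Y l) ` T"
  show "poly numer_poly z = poly partial_fraction_poly z" if "z \<in> ?R" for z
    using that by (auto simp: poly_numer_poly_at_X poly_partial_fraction_poly_at_X
        poly_numer_poly_at_tY poly_partial_fraction_poly_at_tY)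
  have "inj_on X S" using inj_X by (rule inj_on_subset) auto
  moreover have "inj_on (\<lambda>l. t * Y l) T" using inj_Y t_ne by (auto simp: inj_on_def)
  moreover have "X ` S \<inter> (\<lambda>l. t * Y l) ` T = {}" using X_ne_tY by auto
  ultimately have "card ?R = card S + card T"
    using fin_S fin_T by (simp add: card_Un_disjoint card_image)
  then show "degree numer_poly < card ?R" "degree partial_fraction_poly < card ?R"
    using degree_numer_poly degree_partial_fraction_poly by simp_all
qed

lemma omega_on_insert_expansion:
  "omega_on (insert k S) X T Y t = t powi (int (card S + 1) - int (card T)) * (1 - t) *
    (\<Sum>l\<in>T. omega_on S X (T - {l}) Y t * (Y l / (X k - t * Y l))
       * (\<Prod>i\<in>S. (X i - Y l) / (X i - t * Y l))
       * (\<Prod>i\<in>T - {l}. (Y i - t * Y l) / (Y i - Y l)))"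
proof -
  have "poly denom_poly (X k) \<noteq> 0"
    unfolding poly_denom_poly using fin_S fin_T X_diff_ne_0 X_diff_tY_ne_0 k_notin
    by (auto simp: prod_zero_iff)
  moreover have "poly denom_poly (X k) * omega_on (insert k S) X T Y t
      = poly denom_poly (X k) * (\<Sum>l\<in>T. residue l / (X k - t * Y l))"
    unfolding poly_numer_poly_at_Xk[symmetric] poly_partial_fraction_poly_at_Xk[symmetric]
    by (simp only: numer_poly_eq_partial_fraction_poly)
  ultimately have "omega_on (insert k S) X T Y t = (\<Sum>l\<in>T. residue l / (X k - t * Y l))"
    by simp
  then show ?thesis
    unfolding residue_def sum_distrib_left by (simp add: algebra_simps)
qed

end

definition skip_index :: "nat \<Rightarrow> nat \<Rightarrow> nat" where
  "skip_index k i = (if i < k then i else Suc i)"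

lemma inj_skip_index: "inj_on (skip_index k) A"
  unfolding skip_index_def inj_on_def by auto

lemma skip_index_image:
  assumes "k < n"
  shows "skip_index k ` {0..<n - 1} = {0..<n} - {k}"
proof
  show "skip_index k ` {0..<n - 1} \<subseteq> {0..<n} - {k}"
    using assms unfolding skip_index_def by auto
  show "{0..<n} - {k} \<subseteq> skip_index k ` {0..<n - 1}"
  proof
    fix j assume j: "j \<in> {0..<n} - {k}"
    show "j \<in> skip_index k ` {0..<n - 1}"
    proof (cases "j < k")
      case True
      then show ?thesis using j assms by (intro rev_image_eqI[of j]) (auto simp: skip_index_def)
    next
      case False
      then show ?thesis using j assms by (intro rev_image_eqI[of "j - 1"]) (auto simp: skip_index_def)
    qed
  qed
qed

lemma nth_del_nth: "k < length xs \<Longrightarrow> i < length xs - 1 \<Longrightarrow> del_nth k xs ! i = xs ! skip_index k i"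
  unfolding del_nth_def skip_index_def by (auto simp: nth_append min_def)

lemma omega_del_nth:
  assumes "k < length xs" "l < length ys"
  shows "omega (del_nth k xs) (del_nth l ys) t
       = omega_on ({0..<length xs} - {k}) (nth xs) ({0..<length ys} - {l}) (nth ys) t"
proof -
  have len: "length (del_nth k xs) = length xs - 1" "length (del_nth l ys) = length ys - 1"
    using assms by (simp_all add: del_nth_def)
  have "omega (del_nth k xs) (del_nth l ys) t
      = omega_on {0..<length xs - 1} (nth xs \<circ> skip_index k) {0..<length ys - 1} (nth ys \<circ> skip_index l) t"
    unfolding omega_eq_omega_on len by (intro omega_on_cong) (use assms in \<open>auto simp: nth_del_nth\<close>)
  also have "\<dots> = omega_on ({0..<length xs} - {k}) (nth xs) ({0..<length ys} - {l}) (nth ys) t"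
    unfolding omega_on_reindex[OF inj_skip_index inj_skip_index, symmetric]
    by (simp only: skip_index_image[OF assms(1)] skip_index_image[OF assms(2)])
  finally show ?thesis .
qed

theorem proposition3p4:
  fixes x y :: "'a::field list" and t :: 'a and k :: nat
  assumes "1 \<le> length x" and "length x \<le> length y"
    and "k < length x"
    and "distinct x" and "distinct y"
    and "t \<noteq> 0"
    and "\<forall>i<length x. \<forall>j<length y. x!i \<noteq> t * y!j"
  shows "omega x y t =
    t powi (int (length x) - int (length y)) * (1 - t) *
    (\<Sum>l<length y. omega (del_nth k x) (del_nth l y) t * (y!l / (x!k - t * y!l))
       * (\<Prod>i\<in>{0..<length x} - {k}. (x!i - y!l) / (x!i - t * y!l))
       * (\<Prod>i\<in>{0..<length y} - {l}. (y!i - t * y!l) / (y!i - y!l)))"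
proof -
  let ?S = "{0..<length x} - {k}"
  have ins: "insert k ?S = {0..<length x}" using assms(3) by auto
  have "omega x y t = omega_on (insert k ?S) (nth x) {0..<length y} (nth y) t"
    unfolding omega_eq_omega_on ins ..
  also have "\<dots> = t powi (int (card ?S + 1) - int (card {0..<length y})) * (1 - t) *
    (\<Sum>l\<in>{0..<length y}. omega_on ?S (nth x) ({0..<length y} - {l}) (nth y) t
       * (y ! l / (x ! k - t * y ! l))
       * (\<Prod>i\<in>?S. (x ! i - y ! l) / (x ! i - t * y ! l))
       * (\<Prod>i\<in>{0..<length y} - {l}. (y ! i - t * y ! l) / (y ! i - y ! l)))"
    by (rule omega_on_insert_expansion)
      (use assms in \<open>auto simp: ins inj_on_nth simp del: insert_Diff_single\<close>)
  finally show ?thesis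
    using assms(3) by (simp add: omega_del_nth atLeast0LessThan)
qed

end
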